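(* Let $X$ be a standard Gaussian variable, $Y_1,Y_2,\dots$ i.i.d. standard exponential variables, and $N$ a Poisson random variable with mean $\ell\ge0$, all independent. Then $$\sqrt{\textstyle\sum_{i=1}^N Y_i}\ \preceq\ \frac1{\sqrt2}\max\{X+\sqrt{2\ell},0\},$$ where $\preceq$ denotes stochastic domination.
   Context: $Z_1\preceq Z_2$ means $\mathbb P(Z_1\ge x)\le\mathbb P(Z_2\ge x)$ for all real $x$. *)

theory Defs
  imports "HOL-Probability.Probability"
begin

end

theory Submission
  imports Defs "HOL-Real_Asymp.Real_Asymp"
begin

(* Given N = n the sum S_n of the exponential variables is Erlang, and P(S_n \<ge> t) = P(\<Pi>_t < n) for a
   Poisson variable \<Pi>_t of mean t. Hence P(sqrt S_N \<ge> x) is the probability F(l, x^2) that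
   \<Pi>_{x^2} < \<Pi>_l for independent Poisson variables. Along every line u \<mapsto> (u^2, (u + c)^2) the
   function F is nondecreasing: after summation by parts its derivative is nonnegative by AM-GM.
   As u \<rightarrow> \<infinity>, the central limit theorem for the standardized difference of the two Poisson
   variables shows that F tends to the normal tail P(X > sqrt 2 c). Taking u = sqrt l and
   c = x - sqrt l bounds P(sqrt S_N \<ge> x) by P(X > sqrt 2 x - sqrt (2 l)), which is at most the
   right-hand side. *)

section \<open>Poisson weights\<close>

definition poisson_weight :: "real \<Rightarrow> nat \<Rightarrow> real" where
  "poisson_weight l m = exp (- l) * l ^ m / fact m"

definition poisson_below :: "real \<Rightarrow> nat \<Rightarrow> real" where
  "poisson_below s m = (\<Sum>k<m. poisson_weight s k)"

(* P(\<Pi>_s < \<Pi>_l) for independent Poisson variables \<Pi>_l, \<Pi>_s of means l and s *)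
definition poisson_race :: "real \<Rightarrow> real \<Rightarrow> real" where
  "poisson_race l s = (\<Sum>m. poisson_weight l m * poisson_below s m)"

lemma poisson_weight_nonneg: "0 \<le> l \<Longrightarrow> 0 \<le> poisson_weight l m"
  by (simp add: poisson_weight_def)

lemma poisson_weight_sums: "poisson_weight l sums 1"
proof -
  have "(\<lambda>m. exp (- l) * (l ^ m /\<^sub>R fact m)) sums (exp (- l) * exp l)"
    by (intro sums_mult exp_converges)
  moreover have "(\<lambda>m. exp (- l) * (l ^ m /\<^sub>R fact m)) = poisson_weight l"
    by (simp add: fun_eq_iff poisson_weight_def field_simps)
  ultimately show ?thesis
    by (simp add: exp_minus_inverse mult.commute)
qed

lemma poisson_weight_Suc: "poisson_weight x (Suc m) = poisson_weight x m * x / Suc m"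
  by (simp add: poisson_weight_def field_simps)

lemma poisson_weight_le_power: "0 \<le> x \<Longrightarrow> poisson_weight x m \<le> x ^ m / fact m"
  by (simp add: poisson_weight_def divide_right_mono mult_left_le_one_le)

lemma poisson_below_0 [simp]: "poisson_below s 0 = 0"
  by (simp add: poisson_below_def)

lemma poisson_below_Suc: "poisson_below s (Suc m) = poisson_below s m + poisson_weight s m"
  by (simp add: poisson_below_def)

lemma poisson_below_nonneg: "0 \<le> s \<Longrightarrow> 0 \<le> poisson_below s m"
  by (simp add: poisson_below_def poisson_weight_nonneg sum_nonneg)

lemma poisson_below_le_1: "0 \<le> s \<Longrightarrow> poisson_below s m \<le> 1"
  unfolding poisson_below_def
  using sum_le_suminf[OF sums_summable[OF poisson_weight_sums]] poisson_weight_sums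
  by (simp add: poisson_weight_nonneg sums_iff)

lemma poisson_weight_le_1: "0 \<le> s \<Longrightarrow> poisson_weight s m \<le> 1"
  using poisson_below_le_1[of s "Suc m"] poisson_below_nonneg[of s m]
  by (simp add: poisson_below_Suc)

lemma summable_poisson_race:
  assumes "0 \<le> l" "0 \<le> s"
  shows "summable (\<lambda>m. poisson_weight l m * poisson_below s m)"
proof (rule summable_comparison_test'[OF sums_summable[OF poisson_weight_sums]])
  show "norm (poisson_weight l m * poisson_below s m) \<le> poisson_weight l m" for m
    using assms poisson_below_le_1 poisson_below_nonneg poisson_weight_nonneg
    by (simp add: abs_mult mult_left_le)
qed

lemma has_real_derivative_poisson_weight_Suc [derivative_intros]:
  assumes "(f has_real_derivative f') (at x within S)"
  shows "((\<lambda>x. poisson_weight (f x) (Suc m)) has_real_derivative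
           (poisson_weight (f x) m - poisson_weight (f x) (Suc m)) * f') (at x within S)"
proof -
  have "((\<lambda>y. poisson_weight y (Suc m)) has_real_derivative
           poisson_weight y m - poisson_weight y (Suc m)) (at y)" for y
  proof -
    have "((\<lambda>y. exp (- y) * y ^ Suc m) has_real_derivative
            exp (- y) * (Suc m * y ^ m) - exp (- y) * y ^ Suc m) (at y)"
      by (rule derivative_eq_intros refl)+ (simp add: algebra_simps)
    from DERIV_cdivide[OF this, of "fact (Suc m)"] show ?thesis
      by (simp add: poisson_weight_def diff_divide_distrib)
  qed
  from DERIV_chain2[OF this assms] show ?thesis .
qed

lemma has_real_derivative_poisson_below_Suc [derivative_intros]:
  assumes "(f has_real_derivative f') (at x within S)"
  shows "((\<lambda>x. poisson_below (f x) (Suc m)) has_real_derivative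
           - poisson_weight (f x) m * f') (at x within S)"
proof -
  have "((\<lambda>y. poisson_below y (Suc m)) has_real_derivative - poisson_weight y m) (at y)" for y
  proof (induction m)
    case 0
    show ?case
      unfolding poisson_below_def poisson_weight_def by (auto intro!: derivative_eq_intros)
  next
    case (Suc m)
    show ?case
      unfolding poisson_below_Suc[of _ "Suc m"]
      by (rule derivative_eq_intros Suc.IH refl)+ simp
  qed
  from DERIV_chain2[OF this assms] show ?thesis by simp
qed

section \<open>Monotonicity of the Poisson race along lines\<close>

lemma has_real_derivative_line_partial_race:
  "((\<lambda>w. \<Sum>m<Suc K. poisson_weight (w\<^sup>2) m * poisson_below ((w + c)\<^sup>2) m) has_real_derivative
      2 * w * (\<Sum>j<K. poisson_weight (w\<^sup>2) j * poisson_weight ((w + c)\<^sup>2) j)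
      - 2 * w * poisson_weight (w\<^sup>2) K * poisson_below ((w + c)\<^sup>2) K
      - 2 * (w + c) * (\<Sum>j<K. poisson_weight (w\<^sup>2) (Suc j) * poisson_weight ((w + c)\<^sup>2) j)) (at w)"
proof (induction K)
  case 0
  show ?case by simp
next
  case (Suc K)
  have "((\<lambda>w. poisson_weight (w\<^sup>2) (Suc K) * poisson_below ((w + c)\<^sup>2) (Suc K)) has_real_derivative
          (poisson_weight (w\<^sup>2) K - poisson_weight (w\<^sup>2) (Suc K)) * (2 * w) * poisson_below ((w + c)\<^sup>2) (Suc K)
          - poisson_weight (w\<^sup>2) (Suc K) * poisson_weight ((w + c)\<^sup>2) K * (2 * (w + c))) (at w)"
    by (rule derivative_eq_intros refl)+ simp
  from DERIV_add[OF Suc.IH this] show ?case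
    by (simp add: poisson_below_Suc algebra_simps)
qed

lemma poisson_weight_amgm:
  assumes "0 \<le> w" "0 \<le> v"
  shows "2 * v * (poisson_weight (w\<^sup>2) (Suc j) * poisson_weight (v\<^sup>2) j)
     \<le> w * (poisson_weight (w\<^sup>2) j * poisson_weight (v\<^sup>2) j
            + poisson_weight (w\<^sup>2) (Suc j) * poisson_weight (v\<^sup>2) (Suc j))"
proof -
  define a where "a = poisson_weight (w\<^sup>2) j * poisson_weight (v\<^sup>2) j"
  define y where "y = w * v / Suc j"
  have "0 \<le> a" unfolding a_def using poisson_weight_nonneg by simp
  have "2 * y \<le> 1 + y\<^sup>2"
    using sum_squares_ge_zero[of "1 - y" 0] by (simp add: power2_eq_square algebra_simps)
  then have "w * a * (2 * y) \<le> w * a * (1 + y\<^sup>2)"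
    using assms \<open>0 \<le> a\<close> by (intro mult_left_mono) auto
  then show ?thesis
    by (simp add: a_def y_def poisson_weight_Suc power2_eq_square field_simps)
qed

(* By AM-GM the negative sum in the derivative is absorbed by the positive one, up to boundary
   terms at K that vanish as K \<rightarrow> \<infinity>. *)
lemma line_partial_race_has_deriv_lower_bound:
  assumes w: "0 \<le> w" and wc: "0 \<le> w + c"
  shows "\<exists>D. ((\<lambda>w. \<Sum>m<Suc K. poisson_weight (w\<^sup>2) m * poisson_below ((w + c)\<^sup>2) m)
              has_real_derivative D) (at w) \<and> - 3 * w * poisson_weight (w\<^sup>2) K \<le> D"
proof (intro exI conjI, rule has_real_derivative_line_partial_race)
  define v where "v = w + c"
  define d where "d j = poisson_weight (w\<^sup>2) j * poisson_weight (v\<^sup>2) j" for j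
  have "0 \<le> v" using wc by (simp add: v_def)
  have d0: "0 \<le> d j" for j
    unfolding d_def using poisson_weight_nonneg by simp
  have "2 * v * (\<Sum>j<K. poisson_weight (w\<^sup>2) (Suc j) * poisson_weight (v\<^sup>2) j)
      \<le> (\<Sum>j<K. w * (d j + d (Suc j)))"
    unfolding sum_distrib_left d_def by (intro sum_mono poisson_weight_amgm[OF w \<open>0 \<le> v\<close>])
  also have "\<dots> = w * ((\<Sum>j<K. d j) + (\<Sum>j<K. d (Suc j)))"
    by (simp only: sum.distrib sum_distrib_left distrib_left)
  also have "(\<Sum>j<K. d (Suc j)) = (\<Sum>j<K. d j) + d K - d 0"
    using sum.lessThan_Suc_shift[of d K] by simp
  also have "w * ((\<Sum>j<K. d j) + ((\<Sum>j<K. d j) + d K - d 0)) \<le> w * (2 * (\<Sum>j<K. d j) + d K)"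
    using w d0[of 0] by (intro mult_left_mono) auto
  finally have amgm: "2 * v * (\<Sum>j<K. poisson_weight (w\<^sup>2) (Suc j) * poisson_weight (v\<^sup>2) j)
      \<le> w * (2 * (\<Sum>j<K. d j) + d K)" .
  have "w * poisson_weight (w\<^sup>2) K * poisson_below (v\<^sup>2) K \<le> w * poisson_weight (w\<^sup>2) K"
    using w poisson_below_le_1[of "v\<^sup>2" K] poisson_weight_nonneg[of "w\<^sup>2" K]
    by (simp add: mult_left_le)
  moreover have "w * d K \<le> w * poisson_weight (w\<^sup>2) K"
    unfolding d_def using w poisson_weight_le_1[of "v\<^sup>2" K] poisson_weight_nonneg[of "w\<^sup>2" K]
    by (simp add: mult_left_le mult_left_mono)
  ultimately show "- 3 * w * poisson_weight (w\<^sup>2) K \<le>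
      2 * w * (\<Sum>j<K. poisson_weight (w\<^sup>2) j * poisson_weight ((w + c)\<^sup>2) j)
      - 2 * w * poisson_weight (w\<^sup>2) K * poisson_below ((w + c)\<^sup>2) K
      - 2 * (w + c) * (\<Sum>j<K. poisson_weight (w\<^sup>2) (Suc j) * poisson_weight ((w + c)\<^sup>2) j)"
    using amgm by (simp add: d_def v_def algebra_simps)
qed

lemma poisson_race_line_mono:
  assumes w0: "0 \<le> w0" and c: "0 \<le> w0 + c" and "w0 \<le> w1"
  shows "poisson_race (w0\<^sup>2) ((w0 + c)\<^sup>2) \<le> poisson_race (w1\<^sup>2) ((w1 + c)\<^sup>2)"
proof -
  define F where "F w K = (\<Sum>m<Suc K. poisson_weight (w\<^sup>2) m * poisson_below ((w + c)\<^sup>2) m)" for w K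
  define E where "E K = 3 * w1 * ((w1\<^sup>2) ^ K / fact K)" for K
  have F_lim: "(\<lambda>K. F w K) \<longlonglongrightarrow> poisson_race (w\<^sup>2) ((w + c)\<^sup>2)" for w
    unfolding F_def poisson_race_def
    by (intro LIMSEQ_Suc summable_LIMSEQ summable_poisson_race) auto
  have "(\<lambda>K. (w1\<^sup>2) ^ K / fact K) \<longlonglongrightarrow> 0"
    using summable_LIMSEQ_zero[OF summable_exp[of "w1\<^sup>2"]] by (simp add: divide_inverse mult.commute)
  then have E_lim: "(\<lambda>K. E K * (w1 - w0)) \<longlonglongrightarrow> 0"
    unfolding E_def using tendsto_mult_right_zero tendsto_mult_left_zero by blast
  have "F w0 K \<le> F w1 K + E K * (w1 - w0)" for K
  proof -
    have "F w0 K + E K * w0 \<le> F w1 K + E K * w1"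
    proof (rule DERIV_nonneg_imp_nondecreasing[OF \<open>w0 \<le> w1\<close>])
      fix x assume x: "w0 \<le> x" "x \<le> w1"
      have bound: "x * poisson_weight (x\<^sup>2) K \<le> w1 * ((w1\<^sup>2) ^ K / fact K)"
      proof (rule mult_mono)
        have "poisson_weight (x\<^sup>2) K \<le> (x\<^sup>2) ^ K / fact K"
          by (rule poisson_weight_le_power) simp
        also have "\<dots> \<le> (w1\<^sup>2) ^ K / fact K"
          using x w0 by (intro divide_right_mono power_mono) auto
        finally show "poisson_weight (x\<^sup>2) K \<le> (w1\<^sup>2) ^ K / fact K" .
      qed (use x w0 poisson_weight_nonneg in auto)
      obtain D where D: "((\<lambda>w. F w K) has_real_derivative D) (at x)"
        and "- 3 * x * poisson_weight (x\<^sup>2) K \<le> D"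
        using line_partial_race_has_deriv_lower_bound[of x c K] x w0 c unfolding F_def by auto
      with bound have "0 \<le> D + E K"
        unfolding E_def by linarith
      with DERIV_add[OF D DERIV_cmult_Id]
      show "\<exists>y. ((\<lambda>w. F w K + E K * w) has_real_derivative y) (at x) \<and> 0 \<le> y"
        by blast
    qed
    then show ?thesis by (simp add: algebra_simps)
  qed
  moreover have "(\<lambda>K. F w1 K + E K * (w1 - w0)) \<longlonglongrightarrow> poisson_race (w1\<^sup>2) ((w1 + c)\<^sup>2)"
    using tendsto_add[OF F_lim E_lim] by simp
  ultimately show ?thesis
    using F_lim[of w0] by (intro LIMSEQ_le) auto
qed

section \<open>Normal approximation of the Poisson race\<close>

definition poisson_char_exponent :: "real \<Rightarrow> real \<Rightarrow> complex" where
  "poisson_char_exponent r \<phi> = of_real r * (iexp \<phi> - 1) - \<i> * of_real (\<phi> * r)"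

lemma char_poisson_centered:
  assumes r: "0 < r"
  shows "(CLINT k | measure_pmf (poisson_pmf r). iexp (\<phi> * (real k - r)))
     = exp (poisson_char_exponent r \<phi>)"
proof -
  let ?f = "\<lambda>k::nat. pmf (poisson_pmf r) k *\<^sub>R iexp (\<phi> * (real k - r))"
  let ?c = "exp (- of_real r - \<i> * of_real (\<phi> * r))"
  have norm_f: "norm (?f k) = poisson_weight r k" for k
    using r by (simp add: poisson_weight_def norm_mult)
  have "(CLINT k | measure_pmf (poisson_pmf r). iexp (\<phi> * (real k - r))) = integral\<^sup>L (count_space UNIV) ?f"
    unfolding measure_pmf_eq_density by (rule integral_density) auto
  moreover have "integrable (count_space UNIV) ?f"
    unfolding integrable_count_space_nat_iff norm_f by (rule sums_summable[OF poisson_weight_sums])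
  moreover have "?f sums (?c * exp (of_real r * iexp \<phi>))"
  proof -
    have summand: "?c * ((of_real r * iexp \<phi>) ^ n /\<^sub>R fact n) = ?f n" for n
    proof -
      have "iexp (\<phi> * (real n - r)) = iexp \<phi> ^ n * exp (- \<i> * of_real (\<phi> * r))"
        by (simp add: exp_of_nat_mult[symmetric] exp_add[symmetric] algebra_simps)
      moreover have "?c = of_real (exp (- r)) * exp (- \<i> * of_real (\<phi> * r))"
        by (simp add: exp_add[symmetric] algebra_simps flip: exp_of_real)
      ultimately show ?thesis
        using r by (simp add: power_mult_distrib scaleR_conv_of_real algebra_simps divide_inverse)
    qed
    have "(\<lambda>n. ?c * ((of_real r * iexp \<phi>) ^ n /\<^sub>R fact n)) sums (?c * exp (of_real r * iexp \<phi>))"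
      by (intro sums_mult exp_converges)
    then show ?thesis unfolding summand .
  qed
  ultimately show ?thesis
    using sums_integral_count_space_nat sums_unique2
    by (fastforce simp: poisson_char_exponent_def exp_add[symmetric] algebra_simps)
qed

lemma char_distr_poisson_coordinate:
  assumes "0 < r" and "map_pmf (\<lambda>f. f i) p = poisson_pmf r"
  shows "char (distr (measure_pmf p) borel (\<lambda>f. a * (real (f i) - r))) t
     = exp (poisson_char_exponent r (a * t))"
proof -
  have "char (distr (measure_pmf p) borel (\<lambda>f. a * (real (f i) - r))) t
      = (CLINT f | measure_pmf p. (\<lambda>k. iexp (a * t * (real k - r))) (f i))"
    unfolding char_def by (subst integral_distr) (auto simp: mult_ac)
  also have "\<dots> = (CLINT k | measure_pmf (map_pmf (\<lambda>f. f i) p). iexp (a * t * (real k - r)))"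
    by (rule integral_map_pmf[symmetric])
  finally show ?thesis
    unfolding assms(2) char_poisson_centered[OF assms(1)] .
qed

definition poisson_pair :: "real \<Rightarrow> real \<Rightarrow> (nat \<Rightarrow> nat) pmf" where
  "poisson_pair l s = Pi_pmf {0, 1} 0 (\<lambda>i. if i = 0 then poisson_pmf l else poisson_pmf s)"

definition poisson_diff_law :: "real \<Rightarrow> real \<Rightarrow> real measure" where
  "poisson_diff_law l s =
     distr (poisson_pair l s) borel (\<lambda>f. ((real (f 0) - l) - (real (f 1) - s)) / sqrt (l + s))"

lemma real_distribution_poisson_diff_law: "real_distribution (poisson_diff_law l s)"
  unfolding poisson_diff_law_def real_distribution_def real_distribution_axioms_def
  by (auto intro!: prob_space.prob_space_distr measure_pmf.prob_space_axioms)

lemma char_poisson_diff_law: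
  assumes "0 < l" "0 < s"
  shows "char (poisson_diff_law l s) t =
     exp (poisson_char_exponent l (t / sqrt (l + s)) + poisson_char_exponent s (- t / sqrt (l + s)))"
proof -
  define a where "a i = (if i = 0 then 1 else - 1) / sqrt (l + s)" for i :: nat
  define r where "r i = (if i = 0 then l else s)" for i :: nat
  have coord: "map_pmf (\<lambda>f. f i) (poisson_pair l s) = poisson_pmf (r i)" if "i \<in> {0, 1}" for i
    using that unfolding poisson_pair_def r_def by (subst Pi_pmf_component) auto
  have indep: "prob_space.indep_vars (poisson_pair l s) (\<lambda>_. borel)
      (\<lambda>i f. a i * (real (f i) - r i)) {0, 1}"
    unfolding poisson_pair_def
    by (rule prob_space.indep_vars_compose2[OF measure_pmf.prob_space_axioms indep_vars_Pi_pmf]) auto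
  have "(\<lambda>f. ((real (f 0) - l) - (real (f 1) - s)) / sqrt (l + s))
      = (\<lambda>f. \<Sum>i\<in>{0, 1}. a i * (real (f i) - r i))"
    by (simp add: fun_eq_iff a_def r_def diff_divide_distrib)
  then have "char (poisson_diff_law l s) t
      = (\<Prod>i\<in>{0, 1}. char (distr (poisson_pair l s) borel (\<lambda>f. a i * (real (f i) - r i))) t)"
    unfolding poisson_diff_law_def
    by (simp only: prob_space.char_distr_sum[OF measure_pmf.prob_space_axioms indep])
  also have "\<dots> = (\<Prod>i\<in>{0, 1}. exp (poisson_char_exponent (r i) (a i * t)))"
    using coord assms by (intro prod.cong refl char_distr_poisson_coordinate) (auto simp: r_def)
  finally show ?thesis
    by (simp add: a_def r_def exp_add)
qed

lemma norm_poisson_char_exponent_approx: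
  assumes "0 \<le> r"
  shows "norm (poisson_char_exponent r \<phi> + of_real (r * \<phi>\<^sup>2 / 2)) \<le> r * \<bar>\<phi>\<bar> ^ 3 / 6"
proof -
  let ?taylor = "1 + \<i> * of_real \<phi> - of_real (\<phi>\<^sup>2 / 2)"
  have "(\<Sum>k\<le>2. (\<i> * of_real \<phi>) ^ k / fact k) = ?taylor"
    by (simp add: numeral_2_eq_2 power2_eq_square field_simps)
  then have taylor: "norm (iexp \<phi> - ?taylor) \<le> \<bar>\<phi>\<bar> ^ 3 / 6"
    using iexp_approx1[of \<phi> 2] by (simp add: numeral_3_eq_3)
  have "poisson_char_exponent r \<phi> + of_real (r * \<phi>\<^sup>2 / 2) = of_real r * (iexp \<phi> - ?taylor)"
    by (simp add: poisson_char_exponent_def algebra_simps)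
  also have "norm \<dots> = r * norm (iexp \<phi> - ?taylor)"
    using assms by (simp add: norm_mult)
  also have "\<dots> \<le> r * (\<bar>\<phi>\<bar> ^ 3 / 6)"
    using assms taylor by (rule mult_left_mono[rotated])
  finally show ?thesis by simp
qed

lemma norm_poisson_diff_exponent_approx:
  assumes "0 < l" "0 < s"
  shows "norm (poisson_char_exponent l (t / sqrt (l + s)) + poisson_char_exponent s (- t / sqrt (l + s))
                + of_real (t\<^sup>2 / 2)) \<le> \<bar>t\<bar> ^ 3 / 6 * inverse (sqrt (l + s))"
proof -
  define \<sigma> where "\<sigma> = sqrt (l + s)"
  have "0 < \<sigma>" and \<sigma>2: "\<sigma>\<^sup>2 = l + s"
    using assms by (auto simp: \<sigma>_def)
  have "l * (t / \<sigma>)\<^sup>2 / 2 + s * (- t / \<sigma>)\<^sup>2 / 2 = \<sigma>\<^sup>2 * t\<^sup>2 / (2 * \<sigma>\<^sup>2)"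
    by (simp add: power_divide \<sigma>2 add_divide_distrib algebra_simps)
  also have "\<dots> = t\<^sup>2 / 2"
    using \<open>0 < \<sigma>\<close> by simp
  finally have "of_real (t\<^sup>2 / 2) = of_real (l * (t / \<sigma>)\<^sup>2 / 2) + (of_real (s * (- t / \<sigma>)\<^sup>2 / 2) :: complex)"
    by (metis of_real_add)
  then have "poisson_char_exponent l (t / \<sigma>) + poisson_char_exponent s (- t / \<sigma>) + of_real (t\<^sup>2 / 2)
      = (poisson_char_exponent l (t / \<sigma>) + of_real (l * (t / \<sigma>)\<^sup>2 / 2))
        + (poisson_char_exponent s (- t / \<sigma>) + of_real (s * (- t / \<sigma>)\<^sup>2 / 2))"
    by (simp only: add_ac)
  also have "norm \<dots> \<le> l * \<bar>t / \<sigma>\<bar> ^ 3 / 6 + s * \<bar>- t / \<sigma>\<bar> ^ 3 / 6"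
    using assms by (intro norm_triangle_le add_mono norm_poisson_char_exponent_approx) auto
  also have "\<dots> = \<sigma>\<^sup>2 * \<bar>t\<bar> ^ 3 / (6 * \<sigma> ^ 3)"
    using \<open>0 < \<sigma>\<close> by (simp add: \<sigma>2 power_divide abs_divide add_divide_distrib distrib_right)
  also have "\<dots> = \<bar>t\<bar> ^ 3 / 6 * inverse \<sigma>"
    using \<open>0 < \<sigma>\<close> by (simp add: power2_eq_square power3_eq_cube field_simps)
  finally show ?thesis unfolding \<sigma>_def .
qed

lemma weak_conv_poisson_diff_law:
  assumes pos: "\<And>n. 0 < ll n" "\<And>n. 0 < ss n"
    and lim: "filterlim (\<lambda>n. ll n + ss n) at_top sequentially"
  shows "weak_conv_m (\<lambda>n. poisson_diff_law (ll n) (ss n)) std_normal_distribution"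
proof (rule levy_continuity[OF real_distribution_poisson_diff_law real_dist_normal_dist])
  fix t
  define Z where "Z n = poisson_char_exponent (ll n) (t / sqrt (ll n + ss n))
                        + poisson_char_exponent (ss n) (- t / sqrt (ll n + ss n))" for n
  have "(\<lambda>n. inverse (sqrt (ll n + ss n))) \<longlonglongrightarrow> 0"
    by (intro tendsto_inverse_0_at_top filterlim_compose[OF sqrt_at_top lim])
  then have error_lim: "(\<lambda>n. \<bar>t\<bar> ^ 3 / 6 * inverse (sqrt (ll n + ss n))) \<longlonglongrightarrow> 0"
    by (rule tendsto_mult_right_zero)
  have "\<forall>n. norm (Z n - - of_real (t\<^sup>2 / 2)) \<le> \<bar>t\<bar> ^ 3 / 6 * inverse (sqrt (ll n + ss n))"
    using norm_poisson_diff_exponent_approx[OF pos] unfolding Z_def by simp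
  then have "(\<lambda>n. Z n - - of_real (t\<^sup>2 / 2)) \<longlonglongrightarrow> 0"
    using error_lim by (rule Lim_null_comparison[OF always_eventually])
  then have "(\<lambda>n. exp (Z n)) \<longlonglongrightarrow> exp (- of_real (t\<^sup>2 / 2))"
    by (rule tendsto_exp[OF LIM_zero_cancel])
  moreover have "char (poisson_diff_law (ll n) (ss n)) t = exp (Z n)" for n
    unfolding Z_def by (rule char_poisson_diff_law[OF pos])
  moreover have "exp (- of_real (t\<^sup>2 / 2)) = char std_normal_distribution t"
    unfolding char_std_normal_distribution exp_of_real[symmetric] by simp
  ultimately show "(\<lambda>n. char (poisson_diff_law (ll n) (ss n)) t) \<longlonglongrightarrow> char std_normal_distribution t"
    by simp
qed

lemma prob_poisson_pair_less:
  assumes "0 < l" "0 < s"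
  shows "measure_pmf.prob (poisson_pair l s) {f. f 1 < f 0} = poisson_race l s"
proof -
  define A where "A m = (Pi {0, 1} (\<lambda>i. if i = 0 then {m} else {..<m}) :: (nat \<Rightarrow> nat) set)" for m
  have "measure_pmf.prob (poisson_pair l s) (A m) = poisson_weight l m * poisson_below s m" for m
    using assms unfolding A_def poisson_pair_def
    by (subst measure_Pi_pmf_Pi)
       (auto simp: measure_pmf_single measure_measure_pmf_finite poisson_below_def poisson_weight_def field_simps)
  moreover have "(\<lambda>m. measure_pmf.prob (poisson_pair l s) (A m)) sums
      measure_pmf.prob (poisson_pair l s) (\<Union>m. A m)"
    by (rule measure_pmf.finite_measure_UNION) (auto simp: disjoint_family_on_def A_def)
  moreover have "(\<Union>m. A m) = {f. f 1 < f 0}"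
    by (auto simp: A_def Pi_def)
  ultimately show ?thesis
    unfolding poisson_race_def by (simp add: sums_iff)
qed

lemma poisson_race_eq_poisson_diff_law:
  assumes "0 < l" "0 < s"
  shows "poisson_race l s = 1 - cdf (poisson_diff_law l s) ((s - l) / sqrt (l + s))"
proof -
  interpret real_distribution "poisson_diff_law l s"
    by (rule real_distribution_poisson_diff_law)
  have "0 < sqrt (l + s)" using assms by simp
  then have "(s - l) / sqrt (l + s) < ((real (f 0) - l) - (real (f 1) - s)) / sqrt (l + s) \<longleftrightarrow> f 1 < f 0"
    for f :: "nat \<Rightarrow> nat"
    by (simp add: divide_less_cancel)
  then have "measure (poisson_diff_law l s) {(s - l) / sqrt (l + s) <..} = poisson_race l s"
    using prob_poisson_pair_less[OF assms]
    by (simp add: poisson_diff_law_def measure_distr vimage_def)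
  moreover have "measure (poisson_diff_law l s) {(s - l) / sqrt (l + s) <..}
      = 1 - cdf (poisson_diff_law l s) ((s - l) / sqrt (l + s))"
    unfolding cdf_def by (subst prob_compl[symmetric]) (auto intro!: arg_cong[where f=prob])
  ultimately show ?thesis by simp
qed

lemma measure_density_lborel_singleton:
  assumes [measurable]: "f \<in> borel_measurable borel"
  shows "measure (density lborel f) {x} = 0"
proof -
  have "emeasure (density lborel f) {x} = (\<integral>\<^sup>+y. f y * indicator {x} y \<partial>lborel)"
    by (rule emeasure_density) auto
  also have "\<dots> = f x * emeasure lborel {x}"
    by (rule nn_integral_indicator_singleton) simp
  finally show ?thesis by (simp add: measure_def)
qed

lemma weak_conv_cdf_le:
  assumes weak: "weak_conv_m \<mu> \<nu>" and "\<And>n. real_distribution (\<mu> n)" "real_distribution \<nu>"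
    and atomless: "\<And>x. measure \<nu> {x} = 0"
    and \<tau>: "\<tau> \<longlonglongrightarrow> \<tau>\<^sub>0" and le: "\<And>n. cdf (\<mu> n) (\<tau> n) \<le> b"
  shows "cdf \<nu> \<tau>\<^sub>0 \<le> b"
proof -
  interpret \<nu>: real_distribution \<nu> by fact
  have isCont_\<nu>: "isCont (cdf \<nu>) x" for x
    by (simp add: \<nu>.isCont_cdf atomless)
  have shifted: "cdf \<nu> (\<tau>\<^sub>0 - e) \<le> b" if "0 < e" for e
  proof (rule tendsto_le[OF trivial_limit_sequentially tendsto_const])
    show "(\<lambda>n. cdf (\<mu> n) (\<tau>\<^sub>0 - e)) \<longlonglongrightarrow> cdf \<nu> (\<tau>\<^sub>0 - e)"
      using weak isCont_\<nu> unfolding weak_conv_m_def weak_conv_def by blast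
    have "eventually (\<lambda>n. \<tau>\<^sub>0 - e < \<tau> n) sequentially"
      using \<tau> \<open>0 < e\<close> by (intro order_tendstoD(1)) auto
    then show "eventually (\<lambda>n. cdf (\<mu> n) (\<tau>\<^sub>0 - e) \<le> b) sequentially"
    proof eventually_elim
      case (elim n)
      interpret real_distribution "\<mu> n" by fact
      show ?case using cdf_nondecreasing[of "\<tau>\<^sub>0 - e" "\<tau> n"] le[of n] elim by simp
    qed
  qed
  have "((\<lambda>e. cdf \<nu> (\<tau>\<^sub>0 - e)) \<longlongrightarrow> cdf \<nu> (\<tau>\<^sub>0 - 0)) (at_right 0)"
    by (intro isCont_tendsto_compose[OF isCont_\<nu>] tendsto_intros)
  moreover have "eventually (\<lambda>e. cdf \<nu> (\<tau>\<^sub>0 - e) \<le> b) (at_right 0)"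
    using eventually_at_right_less by (rule eventually_mono) (rule shifted)
  ultimately show ?thesis
    by (intro tendsto_le[OF trivial_limit_at_right_real tendsto_const]) auto
qed

(* Moving along the line to infinity can only increase the race, and in the limit the central
   limit theorem turns it into the normal tail. *)
lemma poisson_race_le_normal_tail:
  assumes u: "0 \<le> u" and uc: "0 \<le> u + c"
  shows "poisson_race (u\<^sup>2) ((u + c)\<^sup>2) \<le> 1 - cdf std_normal_distribution (sqrt 2 * c)"
proof -
  define a where "a = \<bar>c\<bar> + u + 1"
  define ll where "ll n = (real n + a)\<^sup>2" for n
  define ss where "ss n = (real n + a + c)\<^sup>2" for n
  have pos: "0 < ll n" "0 < ss n" for n
    unfolding ll_def ss_def a_def using u by (auto simp: abs_if)
  have "filterlim (\<lambda>n. ll n + ss n) at_top sequentially"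
    unfolding ll_def ss_def by real_asymp
  then have weak: "weak_conv_m (\<lambda>n. poisson_diff_law (ll n) (ss n)) std_normal_distribution"
    by (rule weak_conv_poisson_diff_law[OF pos])
  have \<tau>: "(\<lambda>n. (ss n - ll n) / sqrt (ll n + ss n)) \<longlonglongrightarrow> sqrt 2 * c"
    unfolding ll_def ss_def by (real_asymp simp: powr_half_sqrt field_simps)
  have le: "cdf (poisson_diff_law (ll n) (ss n)) ((ss n - ll n) / sqrt (ll n + ss n))
      \<le> 1 - poisson_race (u\<^sup>2) ((u + c)\<^sup>2)" for n
  proof -
    have "poisson_race (u\<^sup>2) ((u + c)\<^sup>2) \<le> poisson_race (ll n) (ss n)"
      unfolding ll_def ss_def using u uc by (intro poisson_race_line_mono) (auto simp: a_def)
    then show ?thesis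
      using poisson_race_eq_poisson_diff_law[OF pos] by simp
  qed
  have "measure std_normal_distribution {x} = 0" for x
    by (rule measure_density_lborel_singleton) simp
  from weak_conv_cdf_le[OF weak real_distribution_poisson_diff_law real_dist_normal_dist this \<tau> le]
  show ?thesis by simp
qed

section \<open>Poisson sums of exponential variables\<close>

lemma erlang_tail_eq_poisson_below:
  assumes "0 < n" "0 \<le> t"
  shows "1 - erlang_CDF (n - 1) 1 t = poisson_below t n"
proof -
  have "{..n - 1} = {..<n}" using assms by auto
  then show ?thesis
    using assms by (simp add: erlang_CDF_def poisson_below_def poisson_weight_def mult.commute)
qed

lemma (in prob_space) prob_exponential_sum_ge:
  assumes "finite I" and indep: "indep_vars (\<lambda>_. borel) Z I"
    and exp: "\<And>i. i \<in> I \<Longrightarrow> distributed M lborel (Z i) (exponential_density 1)"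
    and "0 < t"
  shows "prob {\<omega> \<in> space M. t \<le> (\<Sum>i\<in>I. Z i \<omega>)} = poisson_below t (card I)"
proof (cases "I = {}")
  case True
  with \<open>0 < t\<close> show ?thesis by simp
next
  case False
  let ?S = "\<lambda>\<omega>. \<Sum>i\<in>I. Z i \<omega>"
  have D: "distributed M lborel ?S (erlang_density (card I - 1) 1)"
    using exponential_distributed_sum[OF \<open>finite I\<close> False _ exp indep] by simp
  have [measurable]: "?S \<in> borel_measurable M"
    using distributed_measurable[OF D] by simp
  have "prob {\<omega> \<in> space M. t < ?S \<omega>} = poisson_below t (card I)"
    using erlang_distributed_gt[OF D] erlang_tail_eq_poisson_below \<open>finite I\<close> False \<open>0 < t\<close>
    by (simp add: card_gt_0_iff)
  moreover have "prob {\<omega> \<in> space M. ?S \<omega> = t} = 0"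
  proof -
    have "prob {\<omega> \<in> space M. ?S \<omega> = t} = measure (distr M lborel ?S) {t}"
      by (subst measure_distr) (auto simp: vimage_def Int_def conj_commute)
    also have "\<dots> = 0"
      unfolding distributed_distr_eq_density[OF D] by (rule measure_density_lborel_singleton) simp
    finally show ?thesis .
  qed
  moreover have "prob {\<omega> \<in> space M. t \<le> ?S \<omega>}
      = prob {\<omega> \<in> space M. t < ?S \<omega>} + prob {\<omega> \<in> space M. ?S \<omega> = t}"
    by (subst finite_measure_Union[symmetric]) (auto intro!: arg_cong[where f=prob])
  ultimately show ?thesis by simp
qed

lemma (in prob_space) indep_var_sum:
  assumes indep: "indep_vars (\<lambda>_. borel) Z I" and "j \<in> I" "J \<subseteq> I" "j \<notin> J"
  shows "indep_var borel (Z j) borel (\<lambda>\<omega>. \<Sum>i\<in>J. Z i \<omega> :: real)"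
proof -
  have "indep_var (Pi\<^sub>M {j} (\<lambda>_. borel)) (\<lambda>\<omega>. restrict (\<lambda>i. Z i \<omega>) {j})
                  (Pi\<^sub>M J (\<lambda>_. borel)) (\<lambda>\<omega>. restrict (\<lambda>i. Z i \<omega>) J)"
    using assms by (intro indep_var_restrict[OF indep]) auto
  then have "indep_var borel ((\<lambda>f. f j) \<circ> (\<lambda>\<omega>. restrict (\<lambda>i. Z i \<omega>) {j}))
                       borel ((\<lambda>f. \<Sum>i\<in>J. f i) \<circ> (\<lambda>\<omega>. restrict (\<lambda>i. Z i \<omega>) J))"
    by (rule indep_var_compose) auto
  moreover have "(\<lambda>f. \<Sum>i\<in>J. f i) \<circ> (\<lambda>\<omega>. restrict (\<lambda>i. Z i \<omega>) J) = (\<lambda>\<omega>. \<Sum>i\<in>J. Z i \<omega>)"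
    by (auto simp: fun_eq_iff intro!: sum.cong)
  ultimately show ?thesis
    by (simp add: comp_def)
qed

lemma (in prob_space) prob_poisson_sum_exponential_ge:
  fixes N :: "'a \<Rightarrow> nat" and X :: "'a \<Rightarrow> real" and Y :: "nat \<Rightarrow> 'a \<Rightarrow> real"
  assumes [measurable]: "N \<in> measurable M (count_space UNIV)"
    and N_law: "\<And>k. prob {\<omega> \<in> space M. N \<omega> = k} = poisson_weight l k"
    and Y_law: "\<And>i. distributed M lborel (Y i) (exponential_density 1)"
    and indep: "indep_vars (\<lambda>_. borel)
           (\<lambda>j. case j of 0 \<Rightarrow> X | Suc 0 \<Rightarrow> (\<lambda>\<omega>. real (N \<omega>)) | Suc (Suc i) \<Rightarrow> Y i) UNIV"
    and "0 < t"
  shows "prob {\<omega> \<in> space M. t \<le> (\<Sum>i<N \<omega>. Y i \<omega>)} = poisson_race l t"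
proof -
  define Z where "Z = (\<lambda>j. case j of 0 \<Rightarrow> X | Suc 0 \<Rightarrow> (\<lambda>\<omega>. real (N \<omega>)) | Suc (Suc i) \<Rightarrow> Y i)"
  define S where "S n \<omega> = (\<Sum>i<n. Y i \<omega>)" for n \<omega>
  define E where "E n = {\<omega> \<in> space M. N \<omega> = n \<and> t \<le> S n \<omega>}" for n
  have [measurable]: "Y i \<in> borel_measurable M" for i
    using distributed_measurable[OF Y_law] by simp
  have E_events: "E n \<in> events" for n
    unfolding E_def S_def by measurable
  have "prob (E n) = poisson_weight l n * poisson_below t n" for n
  proof -
    define J where "J = (\<lambda>i. Suc (Suc i)) ` {..<n}"
    have sum_J: "(\<Sum>j\<in>J. Z j \<omega>) = S n \<omega>" for \<omega>
      unfolding J_def S_def Z_def by (subst sum.reindex) (auto simp: inj_on_def)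
    have "indep_var borel (Z 1) borel (\<lambda>\<omega>. \<Sum>j\<in>J. Z j \<omega>)"
      using indep unfolding Z_def[symmetric] by (rule indep_var_sum) (auto simp: J_def)
    moreover have "Z 1 = (\<lambda>\<omega>. real (N \<omega>))"
      by (simp add: Z_def)
    ultimately have "prob ((\<lambda>\<omega>. (real (N \<omega>), S n \<omega>)) -` ({real n} \<times> {t..}) \<inter> space M)
        = prob ((\<lambda>\<omega>. real (N \<omega>)) -` {real n} \<inter> space M) * prob (S n -` {t..} \<inter> space M)"
      unfolding sum_J by (intro indep_varD) auto
    moreover have "prob (S n -` {t..} \<inter> space M) = poisson_below t n"
    proof -
      have "indep_vars (\<lambda>_. borel) Z J"
        using indep unfolding Z_def[symmetric] by (rule indep_vars_subset) simp
      then have "prob {\<omega> \<in> space M. t \<le> (\<Sum>j\<in>J. Z j \<omega>)} = poisson_below t (card J)"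
        using \<open>0 < t\<close> Y_law by (intro prob_exponential_sum_ge) (auto simp: J_def Z_def)
      moreover have "card J = n"
        unfolding J_def by (simp add: card_image inj_on_def)
      ultimately show ?thesis
        unfolding sum_J by (simp add: vimage_def Int_def conj_commute)
    qed
    moreover have "(\<lambda>\<omega>. (real (N \<omega>), S n \<omega>)) -` ({real n} \<times> {t..}) \<inter> space M = E n"
      unfolding E_def by auto
    moreover have "(\<lambda>\<omega>. real (N \<omega>)) -` {real n} \<inter> space M = {\<omega> \<in> space M. N \<omega> = n}"
      by auto
    ultimately show ?thesis
      by (simp add: N_law)
  qed
  moreover have "(\<lambda>n. prob (E n)) sums prob (\<Union>n. E n)"
    by (rule finite_measure_UNION) (use E_events in blast, auto simp: disjoint_family_on_def E_def)
  moreover have "(\<Union>n. E n) = {\<omega> \<in> space M. t \<le> (\<Sum>i<N \<omega>. Y i \<omega>)}"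
    unfolding E_def S_def by auto
  ultimately show ?thesis
    unfolding poisson_race_def by (simp add: sums_iff)
qed

lemma (in prob_space) prob_gt_eq_1_minus_cdf:
  assumes "distributed M lborel X f"
  shows "prob {\<omega> \<in> space M. a < X \<omega>} = 1 - cdf (density lborel f) a"
proof -
  have [measurable]: "X \<in> borel_measurable M"
    using distributed_measurable[OF assms] by simp
  have "cdf (density lborel f) a = prob {\<omega> \<in> space M. X \<omega> \<le> a}"
    unfolding cdf_def distributed_distr_eq_density[OF assms, symmetric]
    by (subst measure_distr) (auto simp: vimage_def Int_def conj_commute)
  moreover have "prob {\<omega> \<in> space M. a < X \<omega>} = 1 - prob {\<omega> \<in> space M. X \<omega> \<le> a}"
    by (subst prob_compl[symmetric]) (auto intro!: arg_cong[where f=prob])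
  ultimately show ?thesis by simp
qed

theorem lemma2p5:
  fixes M :: "'a measure" and X :: "'a \<Rightarrow> real" and Y :: "nat \<Rightarrow> 'a \<Rightarrow> real"
    and N :: "'a \<Rightarrow> nat" and l :: real
  assumes "prob_space M"
    and "0 \<le> l"
    and "distributed M lborel X std_normal_density"
    and "\<And>i. distributed M lborel (Y i) (exponential_density 1)"
    and "N \<in> measurable M (count_space UNIV)"
    and "\<And>k. measure M {\<omega> \<in> space M. N \<omega> = k} = l ^ k / fact k * exp (- l)"
    and "prob_space.indep_vars M (\<lambda>_. borel)
           (\<lambda>j. case j of 0 \<Rightarrow> X | Suc 0 \<Rightarrow> (\<lambda>\<omega>. real (N \<omega>)) | Suc (Suc i) \<Rightarrow> Y i) UNIV"
  shows "\<forall>x::real.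
           measure M {\<omega> \<in> space M. sqrt (\<Sum>i<N \<omega>. Y i \<omega>) \<ge> x}
           \<le> measure M {\<omega> \<in> space M. (1 / sqrt 2) * max (X \<omega> + sqrt (2 * l)) 0 \<ge> x}"
proof
  fix x :: real
  interpret prob_space M by fact
  have [measurable]: "X \<in> borel_measurable M"
    using distributed_measurable[OF assms(3)] by simp
  let ?rhs = "{\<omega> \<in> space M. (1 / sqrt 2) * max (X \<omega> + sqrt (2 * l)) 0 \<ge> x}"
  show "prob {\<omega> \<in> space M. sqrt (\<Sum>i<N \<omega>. Y i \<omega>) \<ge> x} \<le> prob ?rhs"
  proof (cases "x \<le> 0")
    case True
    then have "?rhs = space M" by (auto intro!: order_trans[OF True])
    then show ?thesis by (simp add: prob_space)
  next
    case False
    then have "{\<omega> \<in> space M. sqrt (\<Sum>i<N \<omega>. Y i \<omega>) \<ge> x} = {\<omega> \<in> space M. x\<^sup>2 \<le> (\<Sum>i<N \<omega>. Y i \<omega>)}"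
      using real_sqrt_le_iff[of "x\<^sup>2"] by auto
    also have "prob \<dots> = poisson_race l (x\<^sup>2)"
      using False assms(5-7)
      by (intro prob_poisson_sum_exponential_ge assms(4)) (auto simp: poisson_weight_def)
    also have "\<dots> \<le> 1 - cdf std_normal_distribution (sqrt 2 * (x - sqrt l))"
      using poisson_race_le_normal_tail[of "sqrt l" "x - sqrt l"] assms(2) False by simp
    also have "\<dots> = prob {\<omega> \<in> space M. sqrt 2 * (x - sqrt l) < X \<omega>}"
      by (rule prob_gt_eq_1_minus_cdf[OF assms(3), symmetric])
    also have "\<dots> \<le> prob ?rhs"
      using False
      by (intro finite_measure_mono) (auto simp: real_sqrt_mult field_simps)
    finally show ?thesis .
  qed
qed

end
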